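(* Let $\alpha\in(0,1/2)$ be irrational with continued fraction expansion $[0;a_1,a_2,\ldots]$, let $k\ge1$, and suppose that $a_{k+1}>1$. Then there exists a factor of slope $\alpha$ whose minimum abelian period equals $q_k+q_{k-1}$ or $2q_k$.
   Context: $a_i$ are positive integers; $q_{-1}=0$, $q_0=1$, $q_1=a_1$, $q_k=a_kq_{k-1}+q_{k-2}$ for $k\ge2$ (denominators of convergents). Sturmian words: identify the circle $\mathbb{T}$ with $[0,1)$, let $R(\rho)=\{\rho+\alpha\}$, and fix one of the conventions $I_0=[0,1-\alpha)$, $I_1=[1-\alpha,1)$ or $I_0=(0,1-\alpha]$, $I_1=(1-\alpha,1]$. The Sturmian word $\mathbf{s}_{\rho,\alpha}$ has $n$-th letter $0$ if $R^n(\rho)\in I_0$ and $1$ otherwise. All these words have the same set $\mathcal{L}_\alpha$ of finite factors, the factors of slope $\alpha$. Abelian periods: the Parikh vector of a binary word $u$ is $(|u|_0,|u|_1)$; $P$ is contained in $Q$ if $P\le Q$ componentwise and $P\ne Q$. An abelian decomposition of $w$ is $w=u_0u_1\cdots u_{n-1}u_n$, $n\ge2$, with $u_1,\dots,u_{n-1}$ having a common Parikh vector $P$ and the Parikh vectors of $u_0,u_n$ contained in $P$; the common length of $u_1,\ldots,u_{n-1}$ is an abelian period; the minimum abelian period is the least one. *)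

theory Defs
  imports Complex_Main
begin

primrec cf_r :: "real \<Rightarrow> nat \<Rightarrow> real" where
  "cf_r \<alpha> 0 = \<alpha>"
| "cf_r \<alpha> (Suc n) = frac (1 / cf_r \<alpha> n)"

fun cf_a :: "real \<Rightarrow> nat \<Rightarrow> nat" where
  "cf_a \<alpha> 0 = nat \<lfloor>\<alpha>\<rfloor>"
| "cf_a \<alpha> (Suc n) = nat \<lfloor>1 / cf_r \<alpha> n\<rfloor>"

fun cf_q :: "real \<Rightarrow> nat \<Rightarrow> nat" where
  "cf_q \<alpha> 0 = 1"
| "cf_q \<alpha> (Suc 0) = cf_a \<alpha> 1"
| "cf_q \<alpha> (Suc (Suc n)) = cf_a \<alpha> (n + 2) * cf_q \<alpha> (n + 1) + cf_q \<alpha> n"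

text \<open>Sturmian word s_(rho,alpha) with the convention I_0 = [0, 1 - alpha).\<close>
definition sturmian :: "real \<Rightarrow> real \<Rightarrow> nat \<Rightarrow> nat" where
  "sturmian \<rho> \<alpha> n = (if frac (\<rho> + real n * \<alpha>) < 1 - \<alpha> then 0 else 1)"

definition factors_slope :: "real \<Rightarrow> nat list set" where
  "factors_slope \<alpha> = {w. \<exists>\<rho> i. 0 \<le> \<rho> \<and> \<rho> < 1 \<and>
       w = map (sturmian \<rho> \<alpha>) [i..<i + length w]}"

definition parikh :: "nat list \<Rightarrow> nat \<times> nat" where
  "parikh u = (count_list u 0, count_list u 1)"

definition parikh_contained :: "nat \<times> nat \<Rightarrow> nat \<times> nat \<Rightarrow> bool" where
  "parikh_contained P Q \<longleftrightarrow> fst P \<le> fst Q \<and> snd P \<le> snd Q \<and> P \<noteq> Q"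

definition abelian_decomposition :: "nat list \<Rightarrow> nat list list \<Rightarrow> bool" where
  "abelian_decomposition w us \<longleftrightarrow> length us \<ge> 3 \<and> concat us = w \<and>
     (\<forall>j. 1 \<le> j \<and> j < length us - 1 \<longrightarrow> parikh (us ! j) = parikh (us ! 1)) \<and>
     parikh_contained (parikh (hd us)) (parikh (us ! 1)) \<and>
     parikh_contained (parikh (last us)) (parikh (us ! 1))"

definition abelian_period :: "nat list \<Rightarrow> nat \<Rightarrow> bool" where
  "abelian_period w p \<longleftrightarrow> (\<exists>us. abelian_decomposition w us \<and> length (us ! 1) = p)"

definition min_abelian_period :: "nat list \<Rightarrow> nat" where
  "min_abelian_period w = (LEAST p. abelian_period w p)"

end

theory Submission
  imports Defs
begin

text \<open>Let \<open>q = q\<^sub>k\<close>, \<open>q' = q\<^sub>k\<^sub>-\<^sub>1\<close> and \<open>D = \<parallel>q \<alpha>\<parallel>\<close>, and let \<open>M = \<lfloor>1/D\<rfloor>\<close>.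
  Modulo 1 the multiples of \<open>q \<alpha>\<close> advance by steps \<open>\<plusminus>D\<close>, so an intercept \<open>\<rho>\<close> can be chosen
  for which \<open>M - 1\<close> such steps do not cross an integer. The factor \<open>w\<close> of length
  \<open>(M + 1) q - 1\<close> read from \<open>\<rho>\<close> then consists of blocks of length \<open>2 q\<close> with equal Parikh
  vectors, so \<open>2 q\<close> is an abelian period.

  Conversely, an abelian period \<open>p < 2 q\<close> yields \<open>m\<close> consecutive blocks of length \<open>p\<close> with the
  same number \<open>c\<close> of ones, where \<open>m p \<ge> (M + 1) q + 1 - 2 p\<close>; hence \<open>m \<bar>p \<alpha> - c\<bar> < 1\<close>.
  Writing \<open>p = u q + v q'\<close> (consecutive convergents form a unimodular basis), this drift bound
  fails unless \<open>p = q + q'\<close> or \<open>p = q\<close>. The case \<open>p = q\<close> is excluded by the choice of \<open>\<rho>\<close>: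
  the \<open>M\<close>-th step does cross an integer, because the points \<open>r \<alpha>\<close>, \<open>0 < r < q\<close>, keep a distance
  at least \<open>\<parallel>q' \<alpha>\<parallel> > 2 D\<close> from the integers. The hypothesis \<open>a\<^sub>k\<^sub>+\<^sub>1 > 1\<close> gives this last
  inequality and \<open>M \<ge> 2 q + q'\<close>.\<close>

section \<open>Continued fractions\<close>

text \<open>The distance \<open>\<bar>q\<^sub>n \<alpha> - p\<^sub>n\<bar>\<close> of \<open>q\<^sub>n \<alpha>\<close> to the nearest integer (\<open>cf_approx_error\<close> below),
  written as the product \<open>r\<^sub>0 \<cdots> r\<^sub>n\<close> of the Gauss-map iterates.\<close>
definition cf_dist :: "real \<Rightarrow> nat \<Rightarrow> real" where
  "cf_dist \<alpha> n = (\<Prod>i\<le>n. cf_r \<alpha> i)"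

lemma cf_dist_0 [simp]: "cf_dist \<alpha> 0 = \<alpha>"
  by (simp add: cf_dist_def)

lemma cf_dist_Suc: "cf_dist \<alpha> (Suc n) = cf_dist \<alpha> n * cf_r \<alpha> (Suc n)"
  by (simp add: cf_dist_def)

fun cf_p :: "real \<Rightarrow> nat \<Rightarrow> nat" where
  "cf_p \<alpha> 0 = 0"
| "cf_p \<alpha> (Suc 0) = 1"
| "cf_p \<alpha> (Suc (Suc n)) = cf_a \<alpha> (n + 2) * cf_p \<alpha> (n + 1) + cf_p \<alpha> n"

lemma cf_det:
  "int (cf_q \<alpha> (n + 1)) * cf_p \<alpha> n - int (cf_p \<alpha> (n + 1)) * cf_q \<alpha> n = (-1) ^ (n + 1)"
  by (induction n) (simp_all add: algebra_simps)

declare cf_r.simps(2) [simp del] cf_a.simps(2) [simp del]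

lemma cf_r_notin_Rats: "\<alpha> \<notin> \<rat> \<Longrightarrow> cf_r \<alpha> n \<notin> \<rat>"
proof (induction n)
  case (Suc n)
  then have "1 / cf_r \<alpha> n \<notin> \<rat>"
    by (metis Rats_inverse divide_inverse inverse_inverse_eq mult_1)
  then show ?case by (simp add: cf_r.simps(2))
qed simp

context
  fixes \<alpha> :: real
  assumes \<alpha>: "0 < \<alpha>" "\<alpha> < 1" "\<alpha> \<notin> \<rat>"
begin

lemma cf_r_pos: "0 < cf_r \<alpha> n" and cf_r_less_1: "cf_r \<alpha> n < 1"
proof -
  have "0 < cf_r \<alpha> n \<and> cf_r \<alpha> n < 1"
  proof (cases n)
    case (Suc m)
    have "cf_r \<alpha> n \<noteq> 0" using cf_r_notin_Rats[OF \<alpha>(3)] by (metis Rats_0)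
    then show ?thesis using Suc frac_ge_0 frac_lt_1 by (simp add: cf_r.simps(2) order_le_neq_trans)
  qed (use \<alpha> in simp)
  then show "0 < cf_r \<alpha> n" "cf_r \<alpha> n < 1" by auto
qed

lemma of_nat_cf_a_Suc: "real (cf_a \<alpha> (Suc n)) = of_int \<lfloor>1 / cf_r \<alpha> n\<rfloor>"
  using cf_r_pos[of n] by (simp add: cf_a.simps(2))

lemma cf_a_Suc_ge_1: "cf_a \<alpha> (Suc n) \<ge> 1"
proof -
  have "1 < 1 / cf_r \<alpha> n" using cf_r_pos[of n] cf_r_less_1[of n] by simp
  then have "1 \<le> \<lfloor>1 / cf_r \<alpha> n\<rfloor>" by (simp add: le_floor_iff)
  then show ?thesis by (simp add: cf_a.simps(2) Suc_le_eq)
qed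

lemma cf_r_mult_partial_quotient: "cf_r \<alpha> n * (cf_a \<alpha> (Suc n) + cf_r \<alpha> (Suc n)) = 1"
  using of_nat_cf_a_Suc[of n] cf_r_pos[of n] by (simp add: cf_r.simps(2) frac_def)

lemma cf_dist_pos: "0 < cf_dist \<alpha> n"
  unfolding cf_dist_def using cf_r_pos by (simp add: prod_pos)

lemma cf_dist_le: "cf_dist \<alpha> n \<le> \<alpha>"
proof (induction n)
  case (Suc n)
  have "cf_dist \<alpha> n * cf_r \<alpha> (Suc n) \<le> cf_dist \<alpha> n"
    using cf_dist_pos[of n] cf_r_less_1[of "Suc n"] by (simp add: mult_left_le)
  with Suc show ?case by (simp add: cf_dist_Suc)
qed simp

lemma cf_dist_recurrence_0: "cf_a \<alpha> 1 * cf_dist \<alpha> 0 + cf_dist \<alpha> 1 = 1"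
  using cf_r_mult_partial_quotient[of 0] by (simp add: cf_dist_Suc algebra_simps)

lemma cf_dist_recurrence:
  "cf_dist \<alpha> n = cf_a \<alpha> (n + 2) * cf_dist \<alpha> (n + 1) + cf_dist \<alpha> (n + 2)"
proof -
  have "cf_dist \<alpha> n = cf_dist \<alpha> n * (cf_r \<alpha> (Suc n) * (cf_a \<alpha> (Suc (Suc n)) + cf_r \<alpha> (Suc (Suc n))))"
    using cf_r_mult_partial_quotient[of "Suc n"] by simp
  then show ?thesis
    by (simp add: cf_dist_Suc numeral_2_eq_2 algebra_simps)
qed

lemma cf_q_mult_cf_dist:
  "cf_q \<alpha> (n + 1) * cf_dist \<alpha> n + cf_q \<alpha> n * cf_dist \<alpha> (n + 1) = 1"
proof (induction n)
  case 0
  then show ?case using cf_dist_recurrence_0 by simp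
next
  case (Suc n)
  then show ?case using cf_dist_recurrence[of n] by (simp add: algebra_simps)
qed

lemma cf_approx_error: "cf_q \<alpha> n * \<alpha> - cf_p \<alpha> n = (-1) ^ n * cf_dist \<alpha> n"
proof (induction n rule: induct_nat_012)
  case 1
  then show ?case using cf_dist_recurrence_0 by (simp add: algebra_simps)
next
  case (ge2 n)
  have "cf_q \<alpha> (Suc (Suc n)) * \<alpha> - cf_p \<alpha> (Suc (Suc n))
      = cf_a \<alpha> (n + 2) * (cf_q \<alpha> (n + 1) * \<alpha> - cf_p \<alpha> (n + 1)) + (cf_q \<alpha> n * \<alpha> - cf_p \<alpha> n)"
    by (simp add: algebra_simps)
  also have "\<dots> = (-1) ^ n * (cf_dist \<alpha> n - cf_a \<alpha> (n + 2) * cf_dist \<alpha> (n + 1))"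
  proof -
    have IH: "cf_q \<alpha> (n + 1) * \<alpha> - cf_p \<alpha> (n + 1) = - ((-1) ^ n * cf_dist \<alpha> (n + 1))"
      using ge2(2) by simp
    show ?thesis unfolding IH ge2(1) by (simp add: algebra_simps)
  qed
  also have "\<dots> = (-1) ^ Suc (Suc n) * cf_dist \<alpha> (Suc (Suc n))"
    using cf_dist_recurrence[of n] by (simp add: numeral_2_eq_2)
  finally show ?case .
qed simp

end

lemma cf_a_1_ge_2:
  assumes "0 < \<alpha>" "\<alpha> < 1/2" "\<alpha> \<notin> \<rat>"
  shows "cf_a \<alpha> 1 \<ge> 2"
proof -
  have "2 \<le> \<lfloor>1 / \<alpha>\<rfloor>" using assms by (subst le_floor_iff) (simp add: field_simps)
  then have "nat 2 \<le> nat \<lfloor>1 / \<alpha>\<rfloor>" by (rule nat_mono)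
  then show ?thesis by (simp add: cf_a.simps(2))
qed

lemma cf_q_pos_less_Suc:
  assumes "0 < \<alpha>" "\<alpha> < 1/2" "\<alpha> \<notin> \<rat>"
  shows "1 \<le> cf_q \<alpha> n \<and> cf_q \<alpha> n < cf_q \<alpha> (Suc n)"
proof (induction n)
  case 0
  then show ?case using cf_a_1_ge_2[OF assms] by simp
next
  case (Suc n)
  have "1 \<le> cf_a \<alpha> (Suc (Suc n))" using assms by (intro cf_a_Suc_ge_1) auto
  then have "cf_q \<alpha> (Suc n) \<le> cf_a \<alpha> (Suc (Suc n)) * cf_q \<alpha> (Suc n)" by simp
  moreover have "cf_q \<alpha> (Suc (Suc n)) = cf_a \<alpha> (Suc (Suc n)) * cf_q \<alpha> (Suc n) + cf_q \<alpha> n" by simp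
  ultimately show ?case using Suc by linarith
qed

section \<open>Sturmian factors and abelian periods\<close>

definition orbit_floor :: "real \<Rightarrow> real \<Rightarrow> nat \<Rightarrow> int" where
  "orbit_floor \<rho> \<alpha> n = \<lfloor>\<rho> + real n * \<alpha>\<rfloor>"

lemma sturmian_eq_orbit_floor_diff:
  assumes "0 \<le> \<alpha>" "\<alpha> < 1"
  shows "int (sturmian \<rho> \<alpha> n) = orbit_floor \<rho> \<alpha> (Suc n) - orbit_floor \<rho> \<alpha> n"
proof -
  define x where "x = \<rho> + real n * \<alpha>"
  have "\<rho> + real (Suc n) * \<alpha> = of_int \<lfloor>x\<rfloor> + (frac x + \<alpha>)"
    by (simp add: x_def frac_def algebra_simps)
  then have "orbit_floor \<rho> \<alpha> (Suc n) = \<lfloor>x\<rfloor> + \<lfloor>frac x + \<alpha>\<rfloor>"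
    unfolding orbit_floor_def by (metis add.commute floor_add_int)
  moreover have "\<lfloor>frac x + \<alpha>\<rfloor> = (if frac x < 1 - \<alpha> then 0 else 1)"
    using frac_ge_0[of x] frac_lt_1[of x] assms by (auto simp: floor_eq_iff)
  ultimately show ?thesis
    unfolding sturmian_def orbit_floor_def x_def[symmetric] by auto
qed

lemma count_list_sturmian_1:
  assumes "0 \<le> \<alpha>" "\<alpha> < 1" "a \<le> b"
  shows "int (count_list (map (sturmian \<rho> \<alpha>) [a..<b]) 1) = orbit_floor \<rho> \<alpha> b - orbit_floor \<rho> \<alpha> a"
  using assms(3)
proof (induction b)
  case (Suc b)
  show ?case
  proof (cases "a = Suc b")
    case False
    then have "a \<le> b" using Suc by simp
    moreover have "sturmian \<rho> \<alpha> b = 0 \<or> sturmian \<rho> \<alpha> b = 1" by (simp add: sturmian_def)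
    ultimately show ?thesis
      using Suc.IH sturmian_eq_orbit_floor_diff[OF assms(1,2), of \<rho> b] by auto
  qed simp
qed simp

lemma length_eq_parikh_sum: "set u \<subseteq> {0, 1} \<Longrightarrow> length u = fst (parikh u) + snd (parikh u)"
  by (induction u) (auto simp: parikh_def)

lemma set_sturmian_factor: "set (map (sturmian \<rho> \<alpha>) xs) \<subseteq> {0, 1}"
  by (auto simp: sturmian_def)

lemma parikh_sturmian_factor:
  assumes "0 \<le> \<alpha>" "\<alpha> < 1" "a \<le> b"
  shows "int (snd (parikh (map (sturmian \<rho> \<alpha>) [a..<b]))) = orbit_floor \<rho> \<alpha> b - orbit_floor \<rho> \<alpha> a"
    and "int (fst (parikh (map (sturmian \<rho> \<alpha>) [a..<b])))
           = int (b - a) - (orbit_floor \<rho> \<alpha> b - orbit_floor \<rho> \<alpha> a)"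
  using count_list_sturmian_1[OF assms, of \<rho>] length_eq_parikh_sum[OF set_sturmian_factor, of \<rho> \<alpha> "[a..<b]"]
  by (auto simp: parikh_def)

lemma parikh_contained_length_less:
  assumes "set u \<subseteq> {0, 1}" "set v \<subseteq> {0, 1}" "parikh_contained (parikh u) (parikh v)"
  shows "length u < length v"
  using assms by (auto simp: length_eq_parikh_sum parikh_contained_def prod_eq_iff)

lemma abelian_decomposition_binary:
  assumes dec: "abelian_decomposition w us" and bin: "set w \<subseteq> {0, 1}"
  defines "p \<equiv> length (us ! 1)"
  obtains r m where "r < p" "1 \<le> m" "r + m * p \<le> length w" "length w < r + m * p + p"
    "count_list (take (m * p) (drop r w)) 1 = m * snd (parikh (us ! 1))"
proof -
  define mids where "mids = butlast (tl us)"
  define m where "m = length us - 2"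
  have len: "length us \<ge> 3" and w: "w = concat us"
    and mid_parikh: "\<And>j. 1 \<le> j \<Longrightarrow> j < length us - 1 \<Longrightarrow> parikh (us ! j) = parikh (us ! 1)"
    and short: "parikh_contained (parikh (hd us)) (parikh (us ! 1))"
      "parikh_contained (parikh (last us)) (parikh (us ! 1))"
    using dec unfolding abelian_decomposition_def by blast+
  have us: "us = hd us # mids @ [last us]"
    using len unfolding mids_def by (cases us rule: rev_cases) (auto simp: butlast_tl hd_append)
  have bin_us: "set u \<subseteq> {0, 1}" if "u \<in> set us" for u
    using that bin w by auto
  have mid: "parikh u = parikh (us ! 1)" if u: "u \<in> set mids" for u
  proof -
    obtain i where "i < length mids" "u = us ! Suc i"
      using u len by (auto simp: in_set_conv_nth mids_def nth_butlast nth_tl)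
    then show ?thesis using mid_parikh[of "Suc i"] by (simp add: mids_def)
  qed
  have mid_len: "length u = p" and mid_count: "count_list u 1 = snd (parikh (us ! 1))"
    if u: "u \<in> set mids" for u
  proof -
    have "u \<in> set us" "us ! 1 \<in> set us" using u len by (subst us, simp, simp)
    then have "length u = length (us ! 1)"
      using mid[OF u] length_eq_parikh_sum bin_us by metis
    then show "length u = p" by (simp add: p_def)
    show "count_list u 1 = snd (parikh (us ! 1))" using mid[OF u] by (simp add: parikh_def)
  qed
  have "hd us \<in> set us" "last us \<in> set us" "us ! 1 \<in> set us"
    using len by (auto intro: hd_in_set last_in_set)
  then have "length (hd us) < p" "length (last us) < p"
    unfolding p_def using short by (metis bin_us parikh_contained_length_less)+
  moreover have "length (concat mids) = m * p" "count_list (concat mids) 1 = m * snd (parikh (us ! 1))"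
  proof -
    have const: "map length mids = map (\<lambda>_. p) mids"
      "map (\<lambda>u. count_list u 1) mids = map (\<lambda>_. snd (parikh (us ! 1))) mids"
      using mid_len mid_count by simp_all
    show "length (concat mids) = m * p" "count_list (concat mids) 1 = m * snd (parikh (us ! 1))"
      unfolding length_concat count_list_concat const by (simp_all add: sum_list_triv m_def mids_def numeral_2_eq_2)
  qed
  moreover have "w = hd us @ concat mids @ last us"
    using w us by (metis concat.simps concat_append append_Nil2 append_Cons)
  ultimately show thesis
    using that[of "length (hd us)" m] len by (simp add: m_def)
qed

lemma abelian_period_sturmian_prefix:
  assumes "abelian_period (map (sturmian \<rho> \<alpha>) [0..<L]) p" "0 \<le> \<alpha>" "\<alpha> < 1"
  obtains r m c where "r < p" "1 \<le> m" "r + m * p \<le> L" "L < r + m * p + p"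
    "orbit_floor \<rho> \<alpha> (r + m * p) - orbit_floor \<rho> \<alpha> r = int m * int c"
proof -
  obtain us where dec: "abelian_decomposition (map (sturmian \<rho> \<alpha>) [0..<L]) us"
    and p: "length (us ! 1) = p"
    using assms(1) by (auto simp: abelian_period_def)
  obtain r m where rm: "r < p" "1 \<le> m" "r + m * p \<le> L" "L < r + m * p + p"
    and count: "count_list (take (m * p) (drop r (map (sturmian \<rho> \<alpha>) [0..<L]))) 1
      = m * snd (parikh (us ! 1))"
    using abelian_decomposition_binary[OF dec set_sturmian_factor] unfolding p by auto
  have "take (m * p) (drop r (map (sturmian \<rho> \<alpha>) [0..<L])) = map (sturmian \<rho> \<alpha>) [r..<r + m * p]"
    using rm(3) by (simp add: take_map drop_map)
  then have "orbit_floor \<rho> \<alpha> (r + m * p) - orbit_floor \<rho> \<alpha> r = int m * int (snd (parikh (us ! 1)))"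
    using count count_list_sturmian_1[OF assms(2,3), of r "r + m * p" \<rho>] by simp
  then show thesis by (rule that[OF rm])
qed

lemma orbit_floor_drift:
  assumes "orbit_floor \<rho> \<alpha> (r + m * p) - orbit_floor \<rho> \<alpha> r = int m * c"
  shows "m * \<bar>p * \<alpha> - c\<bar> < 1"
proof -
  define x where "x = \<rho> + r * \<alpha>"
  have "\<lfloor>x + m * (p * \<alpha>)\<rfloor> - \<lfloor>x\<rfloor> = m * c"
    using assms unfolding orbit_floor_def x_def by (simp add: algebra_simps)
  then have "\<bar>m * (p * \<alpha>) - m * c\<bar> < 1"
    by linarith
  then show ?thesis by (simp add: abs_mult flip: right_diff_distrib)
qed

lemma upt_split: "i \<le> j \<Longrightarrow> j \<le> k \<Longrightarrow> [i..<k] = [i..<j] @ [j..<k]"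
  using upt_add_eq_append[of i j "k - j"] by simp

lemma concat_map_upt_blocks:
  "concat (map (\<lambda>i. map f [a + b * i..<a + b * Suc i]) [0..<m]) = map f [a..<a + b * m]"
proof (induction m)
  case (Suc m)
  have "[a..<a + b * Suc m] = [a..<a + b * m] @ [a + b * m..<a + b * Suc m]"
    by (rule upt_split) auto
  with Suc show ?case by simp
qed simp

lemma parikh_containedI:
  assumes "fst P \<le> fst Q" "snd P \<le> snd Q" "fst P + snd P \<noteq> fst Q + snd Q"
  shows "parikh_contained P Q"
  using assms unfolding parikh_contained_def by auto

lemma abelian_period_concatI:
  assumes w: "w = u @ concat bs @ v" and bs: "bs \<noteq> []"
    and blocks: "\<And>b. b \<in> set bs \<Longrightarrow> parikh b = P \<and> length b = p"
    and short: "parikh_contained (parikh u) P" "parikh_contained (parikh v) P"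
  shows "abelian_period w p"
proof -
  define us where "us = u # bs @ [v]"
  have us1: "us ! 1 = hd bs" using bs by (cases bs) (simp_all add: us_def)
  then have P: "parikh (us ! 1) = P" "length (us ! 1) = p" using blocks bs by simp_all
  have "parikh (us ! j) = parikh (us ! 1)" if "1 \<le> j" "j < length us - 1" for j
  proof -
    have j: "j - 1 < length bs"
      using that by (simp add: us_def)
    then have "us ! j = bs ! (j - 1)"
      using that by (cases j) (simp_all add: us_def nth_append)
    then show ?thesis using blocks[OF nth_mem[OF j]] P by simp
  qed
  then have "abelian_decomposition w us"
    using w bs short P unfolding abelian_decomposition_def by (simp add: us_def Suc_le_eq)
  then show ?thesis using P unfolding abelian_period_def by blast
qed

lemma parikh_sturmian_grid_segment:
  fixes q pk :: nat
  assumes \<alpha>: "0 \<le> \<alpha>" "\<alpha> < 1" and pk: "pk \<le> q" and ij: "i \<le> j"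
    and grid: "orbit_floor \<rho> \<alpha> (i * q) = int i * pk" "orbit_floor \<rho> \<alpha> (j * q) = int j * pk"
  shows "parikh (map (sturmian \<rho> \<alpha>) [i * q..<j * q]) = ((j - i) * (q - pk), (j - i) * pk)"
proof -
  have iq: "i * q \<le> j * q" using ij by simp
  have "int (fst (parikh (map (sturmian \<rho> \<alpha>) [i * q..<j * q]))) = (int j - int i) * (int q - int pk)"
    "int (snd (parikh (map (sturmian \<rho> \<alpha>) [i * q..<j * q]))) = (int j - int i) * pk"
    using parikh_sturmian_factor[OF \<alpha> iq, of \<rho>] grid iq by (simp_all add: of_nat_diff algebra_simps)
  moreover have "int ((j - i) * (q - pk)) = (int j - int i) * (int q - int pk)"
    "int ((j - i) * pk) = (int j - int i) * pk"
    using ij pk by (simp_all add: of_nat_diff)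
  ultimately show ?thesis by (metis of_nat_eq_iff prod.collapse)
qed

lemma abelian_period_sturmian_grid:
  fixes q pk M L :: nat and \<delta> :: int
  assumes \<alpha>: "0 \<le> \<alpha>" "\<alpha> < 1"
    and grid: "\<And>j. j \<le> M - 1 \<Longrightarrow> orbit_floor \<rho> \<alpha> (j * q) = int j * pk"
    and last: "orbit_floor \<rho> \<alpha> L = int (M + 1) * pk + \<delta>" "\<delta> = 0 \<or> \<delta> = -1"
    and L: "L = (M + 1) * q - 1" and M: "4 \<le> M" and q: "1 \<le> q"
  shows "abelian_period (map (sturmian \<rho> \<alpha>) [0..<L]) (2 * q)"
proof -
  define s where "s = sturmian \<rho> \<alpha>"
  \<comment> \<open>a head of length \<open>e q\<close> makes the blocks of length \<open>2 q\<close> end exactly at \<open>(M - 1) q\<close>\<close>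
  define e where "e = (if odd M then 0 else 1 :: nat)"
  define m where "m = (M - 1 - e) div 2"
  define bs where "bs = map (\<lambda>i. map s [e * q + 2 * q * i..<e * q + 2 * q * Suc i]) [0..<m]"
  have em: "e + 2 * m = M - 1" and e: "e \<le> 1" and m: "1 \<le> m"
    using M unfolding e_def m_def by auto
  have pk: "pk \<le> q"
    using parikh_sturmian_factor(2)[OF \<alpha>, of 0 q \<rho>] grid[of 0] grid[of 1] M by simp
  have seg: "parikh (map s [i * q..<j * q]) = ((j - i) * (q - pk), (j - i) * pk)"
    if "i \<le> j" "j \<le> M - 1" for i j
    using parikh_sturmian_grid_segment[OF \<alpha> pk that(1)] grid that unfolding s_def by simp
  have block: "parikh b = (2 * (q - pk), 2 * pk) \<and> length b = 2 * q" if b: "b \<in> set bs" for b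
  proof -
    obtain i where i: "i < m" "b = map s [e * q + 2 * q * i..<e * q + 2 * q * Suc i]"
      using b unfolding bs_def by auto
    then have "b = map s [(e + 2 * i) * q..<(e + 2 * i + 2) * q]"
      by (simp add: algebra_simps)
    then show ?thesis using seg[of "e + 2 * i" "e + 2 * i + 2"] em i(1) by simp
  qed
  have "(M + 1) * q = (M - 1) * q + 2 * q"
    using M by (cases M) (simp_all add: algebra_simps)
  moreover have grid_end: "e * q + 2 * q * m = (M - 1) * q"
    using em by (metis add_mult_distrib mult.commute mult.left_commute)
  ultimately have last_start: "e * q \<le> (M - 1) * q" "(M - 1) * q \<le> L" "L - (M - 1) * q = 2 * q - 1"
    using L q by linarith+
  then have split: "map s [0..<L] = map s [0..<e * q] @ concat bs @ map s [(M - 1) * q..<L]"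
    using concat_map_upt_blocks[of s "e * q" "2 * q" m] grid_end
      upt_split[of 0 "e * q" L] upt_split[of "e * q" "(M - 1) * q" L]
    by (simp add: bs_def)
  have head: "parikh_contained (parikh (map s [0..<e * q])) (2 * (q - pk), 2 * pk)"
  proof -
    have "k * (q - pk) + k * pk = k * q" for k
      using pk by (metis add_mult_distrib2 le_add_diff_inverse2)
    then show ?thesis
      using seg[of 0 e] e q em by (intro parikh_containedI) auto
  qed
  have tail: "parikh_contained (parikh (map s [(M - 1) * q..<L])) (2 * (q - pk), 2 * pk)"
  proof -
    have "orbit_floor \<rho> \<alpha> L - orbit_floor \<rho> \<alpha> ((M - 1) * q) = 2 * int pk + \<delta>"
      using grid[of "M - 1"] last(1) M by (simp add: of_nat_diff algebra_simps)
    then have "int (snd (parikh (map s [(M - 1) * q..<L]))) = 2 * int pk + \<delta>"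
      "int (fst (parikh (map s [(M - 1) * q..<L]))) = 2 * int q - 1 - 2 * int pk - \<delta>"
      using parikh_sturmian_factor[OF \<alpha> last_start(2), of \<rho>] last_start(3) q
      by (simp_all add: s_def of_nat_diff)
    then show ?thesis using last(2) by (intro parikh_containedI) auto
  qed
  have "bs \<noteq> []" using m by (simp add: bs_def)
  from abelian_period_concatI[OF split this block head tail] show ?thesis
    unfolding s_def .
qed

section \<open>Diophantine estimates\<close>

lemma drift_bound_neg:
  fixes D M q p v :: real
  assumes D: "0 < D" "M * D \<le> 1" "1 < (M + 1) * D"
    and q: "2 * q + 1 \<le> M" "2 \<le> q" and p: "1 \<le> p" "p + 1 \<le> 2 * q" and v: "v \<le> -1"
  shows "p * q \<le> ((M + 1) * q + 1 - 2 * p) * \<bar>p * D - v\<bar>"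
proof -
  define X where "X = (M + 1) * q + 1 - 2 * p"
  have X: "2 * q * q - 2 * q + 3 \<le> X"
    using mult_right_mono[OF q(1), of q] q p unfolding X_def by (simp add: algebra_simps)
  have "2 * q \<le> q * q"
    using mult_right_mono[OF q(2), of q] q by simp
  with X q(2) have X0: "0 \<le> X" by linarith
  have "p * (2 * p - 1) \<le> (2 * q - 1) * (4 * q - 3)"
    using p by (intro mult_mono) auto
  also have "\<dots> \<le> (2 * q + 1) * (2 * q * q - 2 * q + 3)"
  proof -
    have "0 \<le> q * ((q - 2) * (2 * q - 1) + 5)"
      using q by (intro mult_nonneg_nonneg) auto
    then show ?thesis by (simp add: algebra_simps)
  qed
  also have "\<dots> \<le> M * X"
    using q X by (intro mult_mono) auto
  finally have "p * (2 * p - 1) * D \<le> M * X * D"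
    using D(1) by (intro mult_right_mono) auto
  also have "\<dots> = X * (M * D)"
    by simp
  also have "\<dots> \<le> X"
    using X0 D by (simp add: mult_left_le)
  finally have small: "p * (2 * p - 1) * D \<le> X" .
  have "q + (1 - 2 * p) * D \<le> X * D"
    using mult_right_mono[OF less_imp_le[OF D(3)], of q] q unfolding X_def
    by (simp add: algebra_simps)
  then have "p * (q + (1 - 2 * p) * D) \<le> p * (X * D)"
    using p by (simp add: mult_left_mono)
  moreover have "X * (1 + p * D) \<le> X * \<bar>p * D - v\<bar>"
    using X0 v D p by (intro mult_left_mono) auto
  ultimately show ?thesis
    using small unfolding X_def[symmetric] by (simp add: algebra_simps)
qed

lemma drift_bound_dominated:
  fixes D M q q' p v :: real
  assumes D: "0 < D" "M * D \<le> 1"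
    and q: "2 * q + q' \<le> M" "1 \<le> q'" "q' + 1 \<le> q" and p: "p + 1 \<le> 2 * q"
    and v: "1 \<le> v" "p \<le> v * q'"
  shows "p * q \<le> ((M + 1) * q + 1 - 2 * p) * \<bar>p * D - v\<bar>"
proof -
  define X where "X = (M + 1) * q + 1 - 2 * p"
  have X: "(M - 3) * q \<le> X"
    using p unfolding X_def by (simp add: algebra_simps)
  have M3: "0 \<le> M - 3" using q by simp
  have "0 \<le> (M - 3) * q" using M3 q by simp
  with X have X0: "0 \<le> X" by linarith
  have "q * q' * M \<le> (M - 3) * q * (M - q')"
  proof -
    have "0 \<le> q * (M * (M - 3 - 2 * q') + 3 * q')"
      using q by (intro mult_nonneg_nonneg add_nonneg_nonneg) auto
    then show ?thesis by (simp add: algebra_simps)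
  qed
  also have "\<dots> \<le> X * (M - q')"
    using X q by (intro mult_right_mono) auto
  also have "\<dots> \<le> X * (M * (1 - q' * D))"
  proof -
    have "q' * (M * D) \<le> q'" using D q by (simp add: mult_left_le)
    then show ?thesis using X0 by (intro mult_left_mono) (auto simp: algebra_simps)
  qed
  finally have "M * (q * q') \<le> M * (X * (1 - q' * D))"
    by (simp add: algebra_simps)
  then have "q * q' \<le> X * (1 - q' * D)"
    using q by (simp add: mult_le_cancel_left_pos)
  have "p * q \<le> v * q' * q"
    using v(2) q by (intro mult_right_mono) auto
  also have "\<dots> = v * (q * q')"
    by simp
  also have "\<dots> \<le> v * (X * (1 - q' * D))"
    using v(1) \<open>q * q' \<le> _\<close> by (intro mult_left_mono) auto
  also have "\<dots> = X * (v * (1 - q' * D))"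
    by simp
  also have "\<dots> \<le> X * \<bar>p * D - v\<bar>"
  proof -
    have "p * D \<le> v * q' * D" using v D by (simp add: mult_right_mono)
    then show ?thesis using X0 by (intro mult_left_mono) (auto simp: algebra_simps)
  qed
  finally show ?thesis unfolding X_def .
qed

lemma drift_bound_q_plus:
  fixes D M q q' p v :: real
  assumes D: "0 < D" "M * D \<le> 1"
    and q: "2 * q + q' \<le> M" "1 \<le> q'" and p: "p + 1 \<le> 2 * q" "p = q + v * q'"
    and v: "2 \<le> v"
  shows "p * q \<le> ((M + 1) * q + 1 - 2 * p) * \<bar>p * D - v\<bar>"
proof -
  define X where "X = (M + 1) * q + 1 - 2 * p"
  define t where "t = v * q'"
  have t: "2 \<le> t" "t \<le> q - 1"
    using mult_mono[OF v q(2)] v p unfolding t_def by auto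
  have q0: "0 \<le> q" using t by simp
  have "v * X - 2 * p * q = v * q * (M - 2 * q - q') + (v - 2) * (2 * q * q - 3 * q + 3)
      + (q - 2) * (q - 3) + 2 * v * (q - 1 - t) + q * (q - 1 - t)"
    unfolding X_def p(2) t_def by (simp add: algebra_simps)
  moreover have "0 \<le> (v - 2) * (2 * q * q - 3 * q + 3)"
  proof -
    have "0 \<le> q * (2 * q - 3)" using t by simp
    then show ?thesis using v by (intro mult_nonneg_nonneg) (auto simp: algebra_simps)
  qed
  moreover have "0 \<le> (q - 2) * (q - 3)" using t by simp
  moreover have "0 \<le> v * q * (M - 2 * q - q')" using v q q0 by simp
  moreover have "0 \<le> 2 * v * (q - 1 - t)" "0 \<le> q * (q - 1 - t)" using v t q0 by simp_all
  ultimately have vX: "2 * (p * q) \<le> v * X"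
    by linarith
  have "X * D \<le> q * (M * D) - q * D"
    using t D mult_right_mono[of "q + 1 - 2 * p" "- q" D]
    unfolding X_def p(2) t_def[symmetric] by (simp add: algebra_simps)
  also have "\<dots> \<le> q - q * D"
    using D q0 by (simp add: mult_left_le)
  finally have XD: "X * D \<le> q - q * D" .
  have p0: "0 \<le> p" using p(2) t q0 by (simp add: t_def)
  have "p * (X * D) \<le> p * q - p * (q * D)"
    using mult_left_mono[OF XD p0] by (simp add: right_diff_distrib)
  moreover have "0 \<le> p * (q * D)" using p0 q0 D by simp
  ultimately have "p * q \<le> v * X - p * (X * D)"
    using vX by linarith
  also have "\<dots> = X * (v - p * D)"
    by (simp add: algebra_simps)
  also have "\<dots> \<le> X * \<bar>p * D - v\<bar>"
  proof -
    have "0 < p * q" using p(2) t by (simp add: t_def)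
    then have "0 < v * X" using vX by linarith
    then have "0 \<le> X" using v by (simp add: zero_less_mult_iff)
    then show ?thesis by (intro mult_left_mono) auto
  qed
  finally show ?thesis unfolding X_def .
qed

lemma convergent_coordinates:
  fixes q q' pk pk' p :: nat and c :: int and \<alpha> D D' s :: real
  assumes err: "q * \<alpha> - pk = s * D" "q' * \<alpha> - pk' = - s * D'"
    and det: "\<bar>int q * pk' - int pk * q'\<bar> = 1" and qD: "q * D' + q' * D = 1"
  obtains u v :: int where "int p = u * q + v * q'" "c = u * pk + v * pk'"
    "q * (p * \<alpha> - c) = s * (p * D - v)"
proof -
  define \<Delta> where "\<Delta> = int q * pk' - int pk * q'"
  define u where "u = \<Delta> * (int p * pk' - c * q')"
  define v where "v = \<Delta> * (c * q - int p * pk)"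
  have \<Delta>: "\<Delta> * \<Delta> = 1" using det unfolding \<Delta>_def by (metis abs_mult_self_eq mult_1)
  have "u * q + v * q' = int p * (\<Delta> * \<Delta>)" "u * pk + v * pk' = c * (\<Delta> * \<Delta>)"
    unfolding u_def v_def by (simp_all add: \<Delta>_def algebra_simps)
  then have p: "int p = u * q + v * q'" and c: "c = u * pk + v * pk'"
    using \<Delta> by simp_all
  have "real p = u * q + v * q'" "real_of_int c = u * pk + v * pk'"
    using arg_cong[OF p, of real_of_int] arg_cong[OF c, of real_of_int] by simp_all
  then have "p * \<alpha> - c = u * (q * \<alpha> - pk) + v * (q' * \<alpha> - pk')"
    by (simp add: algebra_simps)
  also have "\<dots> = s * (u * D - v * D')"
    unfolding err by (simp add: algebra_simps)
  finally have E: "p * \<alpha> - c = s * (u * D - v * D')" .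
  have "q * (p * \<alpha> - c) = s * (u * q * D - v * (q * D'))"
    unfolding E by (simp add: algebra_simps)
  also have "q * D' = 1 - q' * D"
    using qD by simp
  also have "s * (u * q * D - v * (1 - q' * D)) = s * (p * D - v)"
    using \<open>real p = _\<close> by (simp add: algebra_simps)
  finally show thesis using that p c by blast
qed

lemma int_eq_mult_imp_factor_1:
  fixes r q :: nat and u :: int
  assumes "int r = u * q" "0 < r" "r < 2 * q"
  shows "u = 1"
proof -
  have "0 < u" using assms by (smt (verit) mult_nonpos_nonneg of_nat_0_le_iff of_nat_0_less_iff)
  moreover have "u < 2"
  proof (rule ccontr)
    assume "\<not> u < 2"
    then have "2 * int q \<le> u * q" by (simp add: mult_right_mono)
    with assms show False by linarith
  qed
  ultimately show "u = 1" by linarith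
qed

lemma best_approximation:
  fixes q q' pk pk' r :: nat and z :: int and \<alpha> D D' s :: real
  assumes err: "q * \<alpha> - pk = s * D" "q' * \<alpha> - pk' = - s * D'"
    and det: "\<bar>int q * pk' - int pk * q'\<bar> = 1" and qD: "q * D' + q' * D = 1"
    and s: "\<bar>s\<bar> = 1" and D: "0 < D" "0 < D'" and r: "0 < r" "r < q"
  shows "D' \<le> \<bar>r * \<alpha> - z\<bar>"
proof -
  obtain u v :: int where uv: "int r = u * q + v * q'"
    and eq: "q * (r * \<alpha> - z) = s * (r * D - v)"
    using convergent_coordinates[OF err det qD] by blast
  have "1 - q' * D \<le> \<bar>r * D - v\<bar>"
  proof (cases "v \<le> 0")
    case True
    have "v \<noteq> 0"
    proof
      assume "v = 0"
      then have "int r = u * q" using uv by simp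
      moreover from this have "u = 1" using r by (intro int_eq_mult_imp_factor_1) auto
      ultimately show False using r by simp
    qed
    then have "real_of_int v \<le> -1" using True by simp
    moreover have "0 \<le> r * D" "0 \<le> q' * D" using D by simp_all
    ultimately show ?thesis by (smt (verit))
  next
    case False
    have "u \<le> 0"
    proof (rule ccontr)
      assume "\<not> u \<le> 0"
      then have "int q \<le> u * q" using mult_right_mono[of 1 u "int q"] by simp
      moreover have "0 \<le> v * q'" using False by simp
      ultimately show False using uv r by linarith
    qed
    then have "u * q \<le> 0" by (simp add: mult_nonpos_nonneg)
    then have "int r \<le> v * q'" using uv by linarith
    then have "real r \<le> real_of_int v * q'" by (metis of_int_le_iff of_int_mult of_int_of_nat_eq)
    then have "r * D \<le> real_of_int v * q' * D" using D by (simp add: mult_right_mono)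
    moreover have "1 - q' * D \<le> real_of_int v * (1 - q' * D)"
    proof -
      have "0 < q * D'" using D r by simp
      then have "0 \<le> 1 - q' * D" using qD by simp
      then show ?thesis using mult_right_mono[of 1 "real_of_int v" "1 - q' * D"] False by simp
    qed
    ultimately show ?thesis by (simp add: algebra_simps)
  qed
  also have "\<bar>r * D - v\<bar> = q * \<bar>r * \<alpha> - z\<bar>"
    using arg_cong[OF eq, of abs] s by (simp add: abs_mult)
  finally have "q * D' \<le> q * \<bar>r * \<alpha> - z\<bar>" using qD by simp
  then show ?thesis using r by (simp add: mult_le_cancel_left_pos)
qed

text \<open>\<open>(M + 1) q + 1 - 2 p\<close> is a lower bound for the length of the periodic middle part of an
  abelian decomposition with period \<open>p\<close> of a factor of length \<open>(M + 1) q - 1\<close>.\<close>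
lemma drift_lower_bound:
  fixes D :: real and q q' M p :: nat and u v :: int
  assumes D: "0 < D" "M * D \<le> 1" "1 < (real M + 1) * D"
    and q: "2 * q + q' \<le> M" "1 \<le> q'" "q' < q" and p: "0 < p" "p < 2 * q"
    and uv: "int p = u * q + v * q'" "(u, v) \<noteq> (1, 0)" "(u, v) \<noteq> (1, 1)"
  shows "real p * q \<le> ((real M + 1) * q + 1 - 2 * real p) * \<bar>p * D - v\<bar>"
proof -
  have real_uv: "real p = real_of_int u * q + real_of_int v * q'"
    using arg_cong[OF uv(1), of real_of_int] by simp
  consider "v \<le> -1" | "v = 0" | "1 \<le> v" "u \<le> 0" | "2 \<le> v" "u = 1" | "1 \<le> v" "2 \<le> u"
    using uv(3) by fastforce
  then show ?thesis
  proof cases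
    case 1
    then show ?thesis using D q p by (intro drift_bound_neg) auto
  next
    case 2
    then have "u = 1" using uv(1) p by (intro int_eq_mult_imp_factor_1[of p u q]) auto
    with 2 uv(2) show ?thesis by simp
  next
    case 3
    then have "u * q \<le> 0" by (simp add: mult_nonpos_nonneg)
    then have "int p \<le> v * q'" using uv(1) by linarith
    then have "real p \<le> real_of_int v * q'" by (metis of_int_le_iff of_int_mult of_int_of_nat_eq)
    then show ?thesis using 3 D q p by (intro drift_bound_dominated) auto
  next
    case 4
    then show ?thesis using D q p real_uv by (intro drift_bound_q_plus) auto
  next
    case 5
    then have "2 * int q \<le> u * q" "0 \<le> v * q'" by (simp_all add: mult_right_mono)
    then show ?thesis using uv(1) p by linarith
  qed
qed

section \<open>The witness factor\<close>

locale slope_witness =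
  fixes \<alpha> :: real and k :: nat
  assumes \<alpha>: "0 < \<alpha>" "\<alpha> < 1/2" "\<alpha> \<notin> \<rat>" and k: "1 \<le> k" and a: "1 < cf_a \<alpha> (k + 1)"
begin

abbreviation "q \<equiv> cf_q \<alpha> k"
abbreviation "q' \<equiv> cf_q \<alpha> (k - 1)"
abbreviation "pk \<equiv> cf_p \<alpha> k"
abbreviation "pk' \<equiv> cf_p \<alpha> (k - 1)"
abbreviation "D \<equiv> cf_dist \<alpha> k"
abbreviation "D' \<equiv> cf_dist \<alpha> (k - 1)"
abbreviation "s \<equiv> (-1) ^ k :: real"

lemma \<alpha>_unit: "0 < \<alpha>" "\<alpha> < 1" "\<alpha> \<notin> \<rat>"
  using \<alpha> by auto

lemma k_Suc: "k = Suc (k - 1)"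
  using k by simp

lemma D_pos: "0 < D" and D'_pos: "0 < D'"
  using cf_dist_pos[OF \<alpha>_unit] by auto

lemma convergent_errors: "q * \<alpha> - pk = s * D" "q' * \<alpha> - pk' = - s * D'"
proof -
  have "s = - ((-1) ^ (k - 1))" by (subst k_Suc) simp
  then show "q * \<alpha> - pk = s * D" "q' * \<alpha> - pk' = - s * D'"
    using cf_approx_error[OF \<alpha>_unit, of k] cf_approx_error[OF \<alpha>_unit, of "k - 1"] by simp_all
qed

lemma convergent_det: "\<bar>int q * pk' - int pk * q'\<bar> = 1"
proof -
  have "int q * pk' - int pk * q' = (-1) ^ k"
    using cf_det[of \<alpha> "k - 1"] k by simp
  then show ?thesis by simp
qed

lemma convergent_dist_identity: "q * D' + q' * D = 1"
  using cf_q_mult_cf_dist[OF \<alpha>_unit, of "k - 1"] k_Suc by (simp add: algebra_simps)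

lemmas convergent_pair = convergent_errors convergent_det convergent_dist_identity

lemma q'_pos: "1 \<le> q'" and q'_less: "q' < q"
  using cf_q_pos_less_Suc[OF \<alpha>, of "k - 1"] k_Suc by auto

lemma D'_le: "D' \<le> \<alpha>"
  using cf_dist_le[OF \<alpha>_unit] .

lemma double_D_less_D': "2 * D < D'"
proof -
  have "D' = cf_a \<alpha> (k + 1) * D + cf_dist \<alpha> (k + 1)"
    using cf_dist_recurrence[OF \<alpha>_unit, of "k - 1"] k by (simp add: numeral_2_eq_2)
  moreover have "2 * D \<le> cf_a \<alpha> (k + 1) * D"
    using a D_pos by (intro mult_right_mono) auto
  ultimately show ?thesis using cf_dist_pos[OF \<alpha>_unit, of "k + 1"] by linarith
qed

definition M :: nat where
  "M = nat \<lfloor>1 / D\<rfloor>"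

lemma M_mult_D: "M * D \<le> 1" "1 < (real M + 1) * D"
proof -
  have "real M = of_int \<lfloor>1 / D\<rfloor>" unfolding M_def using D_pos by simp
  then have "real M \<le> 1 / D" "1 / D < real M + 1" by linarith+
  then show "M * D \<le> 1" "1 < (real M + 1) * D" using D_pos by (simp_all add: field_simps)
qed

lemma M_ge_2q: "2 * q + q' \<le> M"
proof -
  have "cf_q \<alpha> (k + 1) * D + q * cf_dist \<alpha> (k + 1) = 1"
    using cf_q_mult_cf_dist[OF \<alpha>_unit, of k] .
  moreover have "0 < q * cf_dist \<alpha> (k + 1)"
    using cf_dist_pos[OF \<alpha>_unit] q'_pos q'_less by simp
  ultimately have "cf_q \<alpha> (k + 1) \<le> 1 / D"
    using D_pos by (simp add: field_simps)
  then have "int (cf_q \<alpha> (k + 1)) \<le> \<lfloor>1 / D\<rfloor>"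
    by (simp add: le_floor_iff)
  then have "cf_q \<alpha> (k + 1) \<le> M"
    unfolding M_def using nat_mono by fastforce
  moreover have "cf_q \<alpha> (k + 1) = cf_a \<alpha> (k + 1) * q + q'"
    using k_Suc by (metis Suc_eq_plus1 add_2_eq_Suc' cf_q.simps(3))
  moreover have "2 * q \<le> cf_a \<alpha> (k + 1) * q"
    using a by simp
  ultimately show ?thesis by linarith
qed

text \<open>Since \<open>q \<alpha> \<equiv> s D (mod 1)\<close>, the orbit points \<open>\<rho> + j q \<alpha>\<close> move by steps of \<open>s D\<close>;
  \<open>\<rho>\<close> is placed so that \<open>M - 1\<close> such steps stay inside \<open>[0, 1)\<close> and the \<open>M\<close>-th leaves it.\<close>
definition \<rho> :: real where
  "\<rho> = (if even k then 1 - M * D else (real M - 1) * D)"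

definition L :: nat where
  "L = (M + 1) * q - 1"

definition w :: "nat list" where
  "w = map (sturmian \<rho> \<alpha>) [0..<L]"

lemma M_ge_5: "5 \<le> M"
  using M_ge_2q q'_pos q'_less by linarith

lemma \<rho>_unit: "0 \<le> \<rho>" "\<rho> < 1"
  using M_mult_D D_pos M_ge_5 unfolding \<rho>_def by (auto simp: algebra_simps)

lemma w_factor: "w \<in> factors_slope \<alpha>"
  unfolding factors_slope_def w_def using \<rho>_unit by (intro CollectI exI[of _ \<rho>] exI[of _ 0]) simp

lemma orbit_floor_add_mult_q:
  "orbit_floor \<rho> \<alpha> (r + j * q) = \<lfloor>\<rho> + r * \<alpha> + j * (s * D)\<rfloor> + int j * pk"
proof -
  have "\<rho> + real (r + j * q) * \<alpha> = \<rho> + r * \<alpha> + j * (q * \<alpha>)"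
    by (simp add: algebra_simps)
  also have "q * \<alpha> = pk + s * D"
    using convergent_errors(1) by simp
  finally have "\<rho> + real (r + j * q) * \<alpha> = (\<rho> + r * \<alpha> + j * (s * D)) + of_int (int j * pk)"
    by (simp add: algebra_simps)
  then show ?thesis unfolding orbit_floor_def by (metis floor_add_int)
qed

lemma orbit_floor_grid:
  assumes "j \<le> M - 1"
  shows "orbit_floor \<rho> \<alpha> (j * q) = int j * pk"
proof -
  have "real j \<le> real M - 1" using assms M_ge_5 by linarith
  then have "j * D \<le> (real M - 1) * D"
    using D_pos by (simp add: mult_right_mono)
  then have jD: "j * D \<le> M * D - D" "0 \<le> j * D"
    using D_pos by (simp_all add: algebra_simps)
  have "0 \<le> \<rho> + j * (s * D) \<and> \<rho> + j * (s * D) < 1"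
  proof (cases "even k")
    case True
    then have "\<rho> + j * (s * D) = 1 - M * D + j * D" by (simp add: \<rho>_def)
    with jD M_mult_D D_pos show ?thesis by linarith
  next
    case False
    then have "\<rho> + j * (s * D) = M * D - D - j * D" by (simp add: \<rho>_def algebra_simps)
    with jD M_mult_D D_pos show ?thesis by linarith
  qed
  then have "\<lfloor>\<rho> + j * (s * D)\<rfloor> = 0"
    by (simp add: floor_eq_iff)
  then show ?thesis using orbit_floor_add_mult_q[of 0 j] by simp
qed

lemma orbit_floor_L: "orbit_floor \<rho> \<alpha> L = int (M + 1) * pk + (if even k then 0 else -1)"
proof -
  have "L = (q - 1) + M * q" unfolding L_def using q'_less by (simp add: algebra_simps)
  then have "orbit_floor \<rho> \<alpha> L = \<lfloor>\<rho> + real (q - 1) * \<alpha> + M * (s * D)\<rfloor> + int M * pk"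
    using orbit_floor_add_mult_q[of "q - 1" M] by simp
  also have "real (q - 1) * \<alpha> = pk + s * D - \<alpha>"
    using convergent_errors(1) q'_less by (simp add: of_nat_diff algebra_simps)
  also have "\<rho> + (pk + s * D - \<alpha>) + M * (s * D) = (\<rho> + (M + 1) * (s * D) - \<alpha>) + of_int (int pk)"
    by (simp add: algebra_simps)
  also have "\<lfloor>(\<rho> + (M + 1) * (s * D) - \<alpha>) + of_int (int pk)\<rfloor> = \<lfloor>\<rho> + (M + 1) * (s * D) - \<alpha>\<rfloor> + pk"
    by (rule floor_add_int[symmetric])
  also have "\<lfloor>\<rho> + (M + 1) * (s * D) - \<alpha>\<rfloor> = (if even k then 0 else -1)"
    using double_D_less_D' D'_le D_pos \<alpha> unfolding \<rho>_def by (auto simp: floor_eq_iff algebra_simps)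
  finally show ?thesis by (simp add: algebra_simps)
qed

lemma abelian_period_2q: "abelian_period w (2 * q)"
  unfolding w_def
  by (rule abelian_period_sturmian_grid[where \<delta> = "if even k then 0 else -1"])
    (use \<alpha>_unit orbit_floor_grid orbit_floor_L L_def M_ge_5 q'_less in auto)

lemma frac_mult_\<alpha>_bounds:
  assumes "0 < r" "r < q"
  shows "D' \<le> r * \<alpha> - \<lfloor>r * \<alpha>\<rfloor>" "D' \<le> \<lfloor>r * \<alpha>\<rfloor> + 1 - r * \<alpha>"
proof -
  have s: "\<bar>s\<bar> = 1" by simp
  have "D' \<le> \<bar>r * \<alpha> - \<lfloor>r * \<alpha>\<rfloor>\<bar>" "D' \<le> \<bar>r * \<alpha> - (\<lfloor>r * \<alpha>\<rfloor> + 1)\<bar>"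
    using best_approximation[OF convergent_pair s D_pos D'_pos assms, where z = "\<lfloor>r * \<alpha>\<rfloor>"]
      best_approximation[OF convergent_pair s D_pos D'_pos assms, where z = "\<lfloor>r * \<alpha>\<rfloor> + 1"]
    by simp_all
  moreover have "\<lfloor>r * \<alpha>\<rfloor> \<le> r * \<alpha>" "r * \<alpha> < \<lfloor>r * \<alpha>\<rfloor> + 1" by linarith+
  ultimately show "D' \<le> r * \<alpha> - \<lfloor>r * \<alpha>\<rfloor>" "D' \<le> \<lfloor>r * \<alpha>\<rfloor> + 1 - r * \<alpha>"
    by (simp_all add: abs_if)
qed

lemma floor_shift_M_ne:
  assumes "r < q"
  shows "\<lfloor>\<rho> + r * \<alpha> + M * (s * D)\<rfloor> \<noteq> \<lfloor>\<rho> + r * \<alpha>\<rfloor>"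
proof -
  define z where "z = \<lfloor>r * \<alpha>\<rfloor>"
  have z: "z \<le> r * \<alpha>" "r * \<alpha> < z + 1" unfolding z_def by linarith+
  have far: "D' \<le> r * \<alpha> - z" "D' \<le> z + 1 - r * \<alpha>" if "0 < r"
    using frac_mult_\<alpha>_bounds[OF that assms] unfolding z_def by auto
  have r0: "z = 0" if "r = 0" using that unfolding z_def by simp
  have MD: "1 - D < M * D" "M * D \<le> 1" using M_mult_D by (simp_all add: algebra_simps)
  show ?thesis
  proof (cases "even k")
    case True
    then have "\<lfloor>\<rho> + r * \<alpha> + M * (s * D)\<rfloor> = z + 1"
      unfolding \<rho>_def z_def by simp
    moreover have "\<lfloor>\<rho> + r * \<alpha>\<rfloor> = z"
    proof -
      have \<rho>: "\<rho> = 1 - M * D" using True unfolding \<rho>_def by simp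
      have "\<rho> + r * \<alpha> < z + 1"
        using \<rho> z far r0 MD double_D_less_D' \<rho>_unit by (cases "r = 0") force+
      then show ?thesis using z \<rho>_unit by (simp add: floor_eq_iff)
    qed
    ultimately show ?thesis by simp
  next
    case False
    then have \<rho>: "\<rho> = M * D - D" and shift: "\<rho> + r * \<alpha> + M * (s * D) = r * \<alpha> - D"
      unfolding \<rho>_def by (simp_all add: algebra_simps)
    show ?thesis
    proof (cases "r = 0")
      case True
      have "\<lfloor>- D\<rfloor> = -1" "\<lfloor>\<rho>\<rfloor> = 0"
        using \<rho>_unit D_pos D'_le \<alpha> double_D_less_D' by (simp_all add: floor_eq_iff)
      then show ?thesis unfolding shift using True by simp
    next
      case False
      then have "z \<le> r * \<alpha> - D" "r * \<alpha> - D < z + 1"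
        using z far double_D_less_D' D_pos by linarith+
      then have "\<lfloor>r * \<alpha> - D\<rfloor> = z" by (simp add: floor_eq_iff)
      moreover have "z + 1 \<le> \<rho> + r * \<alpha>" "\<rho> + r * \<alpha> < z + 2"
        using \<rho> z far False MD double_D_less_D' D_pos by linarith+
      then have "\<lfloor>\<rho> + r * \<alpha>\<rfloor> = z + 1" by (simp add: floor_eq_iff)
      ultimately show ?thesis unfolding shift by simp
    qed
  qed
qed

lemma orbit_floor_no_period_q:
  assumes r: "r < q" and m: "r + m * q \<le> L" "L < r + m * q + q"
  shows "orbit_floor \<rho> \<alpha> (r + m * q) - orbit_floor \<rho> \<alpha> r \<noteq> int m * pk"
proof -
  have "m * q < (M + 1) * q" "(M + 1) * q < (m + 2) * q"
    using r m q'_less unfolding L_def by (simp_all add: algebra_simps)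
  then have "m < M + 1" "M + 1 < m + 2" by (simp_all only: mult_less_cancel2)
  then have "m = M" by linarith
  then show ?thesis
    using floor_shift_M_ne[OF r] orbit_floor_add_mult_q[of r m] orbit_floor_add_mult_q[of r 0] by simp
qed

lemma abelian_period_less_2q:
  assumes "abelian_period w p" "p < 2 * q"
  shows "p = q + q'"
proof -
  obtain r m c where r: "r < p" "1 \<le> m" "r + m * p \<le> L" "L < r + m * p + p"
    and jump: "orbit_floor \<rho> \<alpha> (r + m * p) - orbit_floor \<rho> \<alpha> r = int m * int c"
    using abelian_period_sturmian_prefix[OF assms(1)[unfolded w_def]] \<alpha>_unit by auto
  have drift: "m * \<bar>p * \<alpha> - c\<bar> < 1"
    using orbit_floor_drift[OF jump] by simp
  obtain u v :: int where uv: "int p = u * q + v * q'" "int c = u * pk + v * pk'"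
    and coord: "q * (p * \<alpha> - real_of_int (int c)) = s * (p * D - v)"
    by (rule convergent_coordinates[OF convergent_pair, where p = p and c = "int c"])
  have dist: "\<bar>p * D - v\<bar> = q * \<bar>p * \<alpha> - c\<bar>"
    using arg_cong[OF coord, of abs] by (simp add: abs_mult)
  consider "(u, v) = (1, 1)" | "(u, v) = (1, 0)" | "(u, v) \<noteq> (1, 0)" "(u, v) \<noteq> (1, 1)"
    by blast
  then show ?thesis
  proof cases
    case 1
    then show ?thesis using uv(1) by simp
  next
    case 2
    then have "p = q" "c = pk" using uv by simp_all
    then show ?thesis using orbit_floor_no_period_q[of r m] r jump by simp
  next
    case 3
    have "L + 2 \<le> m * p + 2 * p" "L + 1 = (M + 1) * q"
      using r q'_less unfolding L_def by simp_all
    then have "real L + 2 \<le> m * p + 2 * p" "real L + 1 = (M + 1) * q"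
      by (metis of_nat_add of_nat_le_iff of_nat_mult of_nat_numeral, metis of_nat_1 of_nat_add of_nat_mult)
    then have X: "(real M + 1) * q + 1 - 2 * real p \<le> m * p"
      by (simp add: algebra_simps)
    have "0 < p" using r by simp
    then have "real p * q \<le> ((real M + 1) * q + 1 - 2 * real p) * \<bar>p * D - v\<bar>"
      using D_pos M_mult_D M_ge_2q q'_pos q'_less assms(2) uv(1) 3 by (intro drift_lower_bound) auto
    also have "\<dots> \<le> (m * p) * \<bar>p * D - v\<bar>"
      using X by (intro mult_right_mono) auto
    also have "\<dots> = (p * q) * (m * \<bar>p * \<alpha> - c\<bar>)"
      unfolding dist by simp
    also have "\<dots> < p * q"
      using drift \<open>0 < p\<close> q'_less by simp
    finally show ?thesis by simp
  qed
qed

lemma min_abelian_period_w: "min_abelian_period w = q + q' \<or> min_abelian_period w = 2 * q"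
proof -
  have "abelian_period w (min_abelian_period w)" "min_abelian_period w \<le> 2 * q"
    using abelian_period_2q unfolding min_abelian_period_def by (auto intro: LeastI Least_le)
  then show ?thesis using abelian_period_less_2q by fastforce
qed

end

theorem proposition5p7:
  fixes \<alpha> :: real and k :: nat
  assumes "0 < \<alpha>" and "\<alpha> < 1/2" and "\<alpha> \<notin> \<rat>"
    and "k \<ge> 1" and "cf_a \<alpha> (k + 1) > 1"
  shows "\<exists>w \<in> factors_slope \<alpha>.
           min_abelian_period w = cf_q \<alpha> k + cf_q \<alpha> (k - 1) \<or>
           min_abelian_period w = 2 * cf_q \<alpha> k"
proof -
  interpret slope_witness \<alpha> k
    using assms by unfold_locales
  show ?thesis
    using w_factor min_abelian_period_w by blast
qed

end
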